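(* Let $n\in\mathbb{R}^+\cup\{0\}$ and let $\mathcal{J}_a^n$ be the Riemann–Liouville fractional integral operator of order $n$ on $D_{HK}$. Then: (i) $\mathcal{J}_a^n$ maps $D_{HK}$ into $D_{HK}$; (ii) $\mathcal{J}_a^n:D_{HK}\to D_{HK}$ is a bounded linear operator with respect to the Alexiewicz norm; (iii) if $(f_k)\subset D_{HK}$ converges in the Alexiewicz norm to $f\in D_{HK}$, then $(\mathcal{J}_a^nf_k)$ converges in the Alexiewicz norm to $\mathcal{J}_a^nf$; (iv) if $n\geq 1$ and $f\in D_{HK}$, then $\mathcal{J}_a^nf(x)=\frac{1}{\Gamma(n)}\lim_{k\to\infty}\int_a^x(x-t)^{n-1}f_k(t)\,dt$, the convergence holding both in $D_{HK}$ (Alexiewicz norm) and in $C[a,b]$ (uniformly on $[a,b]$), for any sequence $(f_k)\subset L^1[a,b]$ with $\|f_k-f\|_A\to 0$.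
   Context: Fix real numbers $a<b$. $\mathcal{D}(a,b)$ is the space of real $C^\infty$ functions with compact support in $(a,b)$, $\mathcal{D}'(a,b)$ the space of distributions on $(a,b)$, $D$ the distributional derivative. Let $C_0=\{F\in C[a,b]:F(a)=0\}$. A distribution $f\in\mathcal{D}'(a,b)$ is Henstock–Kurzweil integrable if there is $F\in C_0$ with $DF=f$ (such $F$ is unique, the primitive of $f$), and its distributional Henstock–Kurzweil integral is $\int_c^d f=F(d)-F(c)$. $D_{HK}$ is the space of these distributions with the Alexiewicz norm $\|f\|_A=\sup_{x\in[a,b]}|F(x)|$; it is a Banach space containing $L^1[a,b]$ as a dense subspace, and integrals against functions of bounded variation are defined (via $\int_a^b fg=F(b)g(b)-\int_a^b F\,dg$). Riemann–Liouville fractional integral on $D_{HK}$: for $n\ge 1$, $\mathcal{J}_a^nf(x)=\frac{1}{\Gamma(n)}\int_a^x(x-t)^{n-1}f(t)\,dt$ for $a\le x\le b$ (distributional Henstock–Kurzweil integral); for $0<n<1$, $\mathcal{J}_a^nf(x)=\frac{1}{\Gamma(n)}\lim_{k\to\infty}\int_a^x(x-t)^{n-1}f_k(t)\,dt$, where $(f_k)\subset L^1[a,b]$ with $\|f_k-f\|_A\to0$ (the convolution of the $L^1$ kernel $u\mapsto u^{n-1}$ on $(0,b-a]$, $0$ elsewhere, with $f$); $\mathcal{J}_a^0$ is the identity. *)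

theory Defs
  imports "HOL-Analysis.Analysis"
begin

text \<open>Representation of D_HK: a distribution f in D_HK is represented by its
(unique) primitive F in C_0 = {F in C[a,b]. F a = 0}; the map f to F is the
isometric isomorphism of D_HK onto C_0 (distributions are not in the library).
Only the values of F on [a,b] are relevant.\<close>

definition DHK :: "real \<Rightarrow> real \<Rightarrow> (real \<Rightarrow> real) set" where
  "DHK a b = {F. continuous_on {a..b} F \<and> F a = 0}"

definition alex_norm :: "real \<Rightarrow> real \<Rightarrow> (real \<Rightarrow> real) \<Rightarrow> real" where
  "alex_norm a b F = (SUP x\<in>{a..b}. \<bar>F x\<bar>)"

text \<open>Primitive of a (pointwise) function g that is Henstock--Kurzweil integrable
on [a,b]; for g in L^1[a,b] this is the embedding of L^1 into D_HK.\<close>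
definition prim :: "real \<Rightarrow> (real \<Rightarrow> real) \<Rightarrow> (real \<Rightarrow> real)" where
  "prim a g = (\<lambda>x. integral {a..x} g)"

definition has_RS_integral ::
  "(real \<Rightarrow> real) \<Rightarrow> (real \<Rightarrow> real) \<Rightarrow> real \<Rightarrow> real \<Rightarrow> real \<Rightarrow> bool" where
  "has_RS_integral F g c d I \<longleftrightarrow>
     (\<forall>\<epsilon>>0. \<exists>\<delta>>0. \<forall>(m::nat) (x::nat \<Rightarrow> real) (t::nat \<Rightarrow> real).
        (x 0 = c \<and> x m = d \<and>
         (\<forall>i<m. x i < x (Suc i) \<and> x (Suc i) - x i < \<delta> \<and> x i \<le> t i \<and> t i \<le> x (Suc i)))
        \<longrightarrow> \<bar>(\<Sum>i<m. F (t i) * (g (x (Suc i)) - g (x i))) - I\<bar> < \<epsilon>)"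

definition RS_integral :: "(real \<Rightarrow> real) \<Rightarrow> (real \<Rightarrow> real) \<Rightarrow> real \<Rightarrow> real \<Rightarrow> real" where
  "RS_integral F g c d = (THE I. has_RS_integral F g c d I)"

text \<open>Integral over [a,x] of f (with primitive F) against a function g of bounded
variation: F(x) g(x) - int_a^x F dg (the primitive of f restricted to (a,x) is F on [a,x]).\<close>
definition hk_int_bv :: "real \<Rightarrow> (real \<Rightarrow> real) \<Rightarrow> (real \<Rightarrow> real) \<Rightarrow> real \<Rightarrow> real" where
  "hk_int_bv a F g x = F x * g x - RS_integral F g a x"

text \<open>Kernel u ^ (n-1) for u \<ge> 0 (with 0^0 = 1; the value at u = 0 is irrelevant for n < 1).\<close>
definition rl_kernel :: "real \<Rightarrow> real \<Rightarrow> real" where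
  "rl_kernel n u = (if u = 0 then (if n = 1 then 1 else 0) else u powr (n - 1))"

text \<open>For n \<ge> 1: the pointwise function J_a^n f(x), f in D_HK with primitive F.\<close>
definition RL_fun :: "real \<Rightarrow> real \<Rightarrow> (real \<Rightarrow> real) \<Rightarrow> real \<Rightarrow> real" where
  "RL_fun n a F x = (1 / Gamma n) * hk_int_bv a F (\<lambda>t. rl_kernel n (x - t)) x"

definition RL_L1 :: "real \<Rightarrow> real \<Rightarrow> (real \<Rightarrow> real) \<Rightarrow> real \<Rightarrow> real" where
  "RL_L1 n a g x = (1 / Gamma n) * integral {a..x} (\<lambda>t. rl_kernel n (x - t) * g t)"

text \<open>For 0 < n < 1: P (a primitive) is the D_HK-limit of J_a^n g_k for every
sequence (g_k) in L^1[a,b] converging to f (primitive F) in the Alexiewicz norm.\<close>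
definition RL_limit :: "real \<Rightarrow> real \<Rightarrow> real \<Rightarrow> (real \<Rightarrow> real) \<Rightarrow> (real \<Rightarrow> real) \<Rightarrow> bool" where
  "RL_limit n a b F P \<longleftrightarrow> P \<in> DHK a b \<and>
     (\<forall>gs::nat \<Rightarrow> real \<Rightarrow> real.
        (\<forall>k. gs k absolutely_integrable_on {a..b}) \<and>
        (\<lambda>k. alex_norm a b (\<lambda>x. prim a (gs k) x - F x)) \<longlonglongrightarrow> 0
        \<longrightarrow> (\<lambda>k. alex_norm a b (\<lambda>x. prim a (RL_L1 n a (gs k)) x - P x)) \<longlonglongrightarrow> 0)"

text \<open>Primitive of J_a^n f, for f in D_HK with primitive F.\<close>
definition RL_prim :: "real \<Rightarrow> real \<Rightarrow> real \<Rightarrow> (real \<Rightarrow> real) \<Rightarrow> (real \<Rightarrow> real)" where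
  "RL_prim n a b F =
     (if n = 0 then F
      else if 1 \<le> n then prim a (RL_fun n a F)
      else (SOME P. RL_limit n a b F P))"

end

theory Submission
  imports Defs
begin

text \<open>
  For \<open>n \<ge> 1\<close> the kernel \<open>t \<mapsto> (x - t)\<^sup>n\<^sup>-\<^sup>1\<close> is continuous and decreasing on
  \<open>[a, x]\<close>. Every primitive \<open>F \<in> C\<^sub>0\<close> is a uniform limit of primitives of continuous
  functions, and Riemann--Stieltjes integrals against a monotone integrator pass to uniform limits,
  so \<open>\<integral>\<^sub>a\<^sup>x F d\<^sub>t (x - t)\<^sup>n\<^sup>-\<^sup>1\<close> exists and \<open>J\<^sup>n f(x)\<close> is bounded by
  \<open>(1 + (b - a)\<^sup>n\<^sup>-\<^sup>1) / \<Gamma>(n) \<cdot> \<parallel>f\<parallel>\<^sub>A\<close>. On \<open>L\<^sup>1\<close> the definition agrees with the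
  classical integral by integration by parts; hence \<open>J\<^sup>n f\<close> is a uniform limit of the continuous
  functions \<open>J\<^sup>n g\<^sub>k\<close>, so it is continuous and its primitive is bounded by \<open>b - a\<close> times the same
  constant. For \<open>0 < n < 1\<close>, Fubini's theorem gives \<open>\<integral>\<^sub>a\<^sup>x J\<^sup>n g = J\<^sup>n\<^sup>+\<^sup>1 g(x)\<close> on
  \<open>L\<^sup>1\<close>, so the limit defining \<open>J\<^sup>n f\<close> exists and its primitive is the continuous function
  \<open>J\<^sup>n\<^sup>+\<^sup>1 f\<close>. In all cases the operator is linear and bounded for the Alexiewicz norm, which
  gives continuity.
\<close>

lemma abs_le_alex_norm:
  assumes "continuous_on {a..b} F" "x \<in> {a..b}"
  shows "\<bar>F x\<bar> \<le> alex_norm a b F"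
proof -
  have "bounded ((\<lambda>x. \<bar>F x\<bar>) ` {a..b})"
    using assms(1) by (intro compact_imp_bounded compact_continuous_image continuous_intros) auto
  then show ?thesis
    unfolding alex_norm_def using assms(2) by (intro cSUP_upper bounded_imp_bdd_above)
qed

lemma alex_norm_le:
  "a \<le> b \<Longrightarrow> (\<And>x. x \<in> {a..b} \<Longrightarrow> \<bar>F x\<bar> \<le> M) \<Longrightarrow> alex_norm a b F \<le> M"
  unfolding alex_norm_def by (intro cSUP_least) auto

lemma alex_norm_cong: "(\<And>x. x \<in> {a..b} \<Longrightarrow> F x = G x) \<Longrightarrow> alex_norm a b F = alex_norm a b G"
  unfolding alex_norm_def by simp

lemma alex_norm_tendsto_zeroI:
  assumes "a \<le> b" and bound: "\<And>k x. x \<in> {a..b} \<Longrightarrow> \<bar>Fs k x\<bar> \<le> u k" and "u \<longlonglongrightarrow> 0"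
  shows "(\<lambda>k. alex_norm a b (Fs k)) \<longlonglongrightarrow> 0"
proof (rule real_tendsto_sandwich[OF _ _ tendsto_const \<open>u \<longlonglongrightarrow> 0\<close>])
  have "\<bar>Fs k a\<bar> \<le> alex_norm a b (Fs k)" for k
    unfolding alex_norm_def using \<open>a \<le> b\<close> bound by (intro cSUP_upper bdd_aboveI2) auto
  then show "\<forall>\<^sub>F k in sequentially. 0 \<le> alex_norm a b (Fs k)"
    by (intro always_eventually allI) (meson abs_ge_zero order_trans)
  show "\<forall>\<^sub>F k in sequentially. alex_norm a b (Fs k) \<le> u k"
    using alex_norm_le[OF \<open>a \<le> b\<close> bound] by simp
qed

lemma uniform_limit_null_bound:
  fixes Fs :: "nat \<Rightarrow> 'a \<Rightarrow> real" and u :: "nat \<Rightarrow> real"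
  assumes "\<And>k x. x \<in> S \<Longrightarrow> \<bar>Fs k x - F x\<bar> \<le> u k" and "u \<longlonglongrightarrow> 0"
  shows "uniform_limit S Fs F sequentially"
proof (rule uniform_limitI)
  fix \<epsilon> :: real
  assume "\<epsilon> > 0"
  with \<open>u \<longlonglongrightarrow> 0\<close> have "\<forall>\<^sub>F k in sequentially. u k < \<epsilon>"
    by (simp add: order_tendstoD(2))
  then show "\<forall>\<^sub>F k in sequentially. \<forall>x\<in>S. dist (Fs k x) (F x) < \<epsilon>"
  proof eventually_elim
    case (elim k)
    then show ?case
      using assms(1)[of _ k] by (fastforce simp: dist_real_def)
  qed
qed

lemma alex_norm_tendsto_imp_uniform_limit:
  assumes "\<And>k. continuous_on {a..b} (Fs k)" "continuous_on {a..b} F"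
    and "(\<lambda>k. alex_norm a b (\<lambda>x. Fs k x - F x)) \<longlonglongrightarrow> 0"
  shows "uniform_limit {a..b} Fs F sequentially"
  by (rule uniform_limit_null_bound[where u = "\<lambda>k. alex_norm a b (\<lambda>x. Fs k x - F x)"])
    (use assms in \<open>auto intro!: abs_le_alex_norm continuous_intros\<close>)

lemma alex_norm_limit_unique:
  assumes "\<And>k. continuous_on {a..b} (Hs k)" "continuous_on {a..b} P" "continuous_on {a..b} Q"
    and "(\<lambda>k. alex_norm a b (\<lambda>x. Hs k x - P x)) \<longlonglongrightarrow> 0"
    and "(\<lambda>k. alex_norm a b (\<lambda>x. Hs k x - Q x)) \<longlonglongrightarrow> 0"
    and x: "x \<in> {a..b}"
  shows "P x = Q x"
proof -
  have "\<bar>P x - Q x\<bar> \<le> alex_norm a b (\<lambda>x. Hs k x - P x) + alex_norm a b (\<lambda>x. Hs k x - Q x)" for k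
  proof -
    have "continuous_on {a..b} (\<lambda>x. Hs k x - P x)" "continuous_on {a..b} (\<lambda>x. Hs k x - Q x)"
      using assms(1-3) by (auto intro!: continuous_intros)
    then have "\<bar>Hs k x - P x\<bar> \<le> alex_norm a b (\<lambda>x. Hs k x - P x)"
      "\<bar>Hs k x - Q x\<bar> \<le> alex_norm a b (\<lambda>x. Hs k x - Q x)"
      using abs_le_alex_norm[OF _ x] by blast+
    then show ?thesis
      by linarith
  qed
  moreover have "(\<lambda>k. alex_norm a b (\<lambda>x. Hs k x - P x) + alex_norm a b (\<lambda>x. Hs k x - Q x)) \<longlonglongrightarrow> 0"
    using tendsto_add[OF assms(4,5)] by simp
  ultimately have "\<bar>P x - Q x\<bar> \<le> 0"
    by (intro LIMSEQ_le_const) auto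
  then show ?thesis
    by simp
qed

lemma DHK_lin: "F \<in> DHK a b \<Longrightarrow> G \<in> DHK a b \<Longrightarrow> (\<lambda>y. \<alpha> * F y + \<beta> * G y) \<in> DHK a b"
  unfolding DHK_def by (auto intro!: continuous_intros)

lemma DHK_diff: "F \<in> DHK a b \<Longrightarrow> G \<in> DHK a b \<Longrightarrow> (\<lambda>y. F y - G y) \<in> DHK a b"
  unfolding DHK_def by (auto intro!: continuous_intros)

lemma DHK_cong:
  assumes "a \<le> b" "\<And>x. x \<in> {a..b} \<Longrightarrow> F x = G x" "G \<in> DHK a b"
  shows "F \<in> DHK a b"
  using assms continuous_on_eq[of "{a..b}" G F] unfolding DHK_def by simp

lemma prim_DHK: "g integrable_on {a..b} \<Longrightarrow> prim a g \<in> DHK a b"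
  unfolding DHK_def prim_def by (simp add: indefinite_integral_continuous_1)

text \<open>Operators on \<open>D_HK\<close> act on primitives, and only their values on \<open>[a, b]\<close> matter.\<close>

definition bounded_linear_DHK :: "real \<Rightarrow> real \<Rightarrow> ((real \<Rightarrow> real) \<Rightarrow> real \<Rightarrow> real) \<Rightarrow> bool" where
  "bounded_linear_DHK a b T \<longleftrightarrow>
     (\<forall>F\<in>DHK a b. \<forall>G\<in>DHK a b. \<forall>\<alpha> \<beta>. \<forall>x\<in>{a..b}.
        T (\<lambda>y. \<alpha> * F y + \<beta> * G y) x = \<alpha> * T F x + \<beta> * T G x) \<and>
     (\<exists>K. \<forall>F\<in>DHK a b. \<forall>x\<in>{a..b}. \<bar>T F x\<bar> \<le> K * alex_norm a b F)"

lemma bounded_linear_DHK_diff: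
  assumes "bounded_linear_DHK a b T" "F \<in> DHK a b" "G \<in> DHK a b" "x \<in> {a..b}"
  shows "T (\<lambda>y. F y - G y) x = T F x - T G x"
proof -
  have "T (\<lambda>y. 1 * F y + (-1) * G y) x = 1 * T F x + (-1) * T G x"
    using assms unfolding bounded_linear_DHK_def by blast
  then show ?thesis
    by simp
qed

lemma bounded_linear_DHK_cong:
  assumes "bounded_linear_DHK a b S" "\<And>F x. F \<in> DHK a b \<Longrightarrow> x \<in> {a..b} \<Longrightarrow> T F x = S F x"
  shows "bounded_linear_DHK a b T"
  using assms DHK_lin unfolding bounded_linear_DHK_def by simp

lemma bounded_linear_DHK_id: "bounded_linear_DHK a b (\<lambda>F. F)"
  unfolding bounded_linear_DHK_def using abs_le_alex_norm
  by (auto simp: DHK_def intro!: exI[of _ 1])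

lemma bounded_linear_DHK_tendsto:
  assumes T: "bounded_linear_DHK a b T" and "a \<le> b"
    and Fs: "\<And>k. Fs k \<in> DHK a b" and F: "F \<in> DHK a b"
    and lim: "(\<lambda>k. alex_norm a b (\<lambda>x. Fs k x - F x)) \<longlonglongrightarrow> 0"
  shows "(\<lambda>k. alex_norm a b (\<lambda>x. T (Fs k) x - T F x)) \<longlonglongrightarrow> 0"
    and "uniform_limit {a..b} (\<lambda>k. T (Fs k)) (T F) sequentially"
proof -
  obtain K where K: "\<And>F x. F \<in> DHK a b \<Longrightarrow> x \<in> {a..b} \<Longrightarrow> \<bar>T F x\<bar> \<le> K * alex_norm a b F"
    using T unfolding bounded_linear_DHK_def by blast
  have bound: "\<bar>T (Fs k) x - T F x\<bar> \<le> K * alex_norm a b (\<lambda>x. Fs k x - F x)" if "x \<in> {a..b}" for k x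
    using K[OF DHK_diff[OF Fs F] that] bounded_linear_DHK_diff[OF T Fs F that] by simp
  have null: "(\<lambda>k. K * alex_norm a b (\<lambda>x. Fs k x - F x)) \<longlonglongrightarrow> 0"
    using tendsto_mult_right_zero[OF lim] .
  show "(\<lambda>k. alex_norm a b (\<lambda>x. T (Fs k) x - T F x)) \<longlonglongrightarrow> 0"
    by (rule alex_norm_tendsto_zeroI[OF \<open>a \<le> b\<close> bound null])
  show "uniform_limit {a..b} (\<lambda>k. T (Fs k)) (T F) sequentially"
    by (rule uniform_limit_null_bound[OF bound null])
qed

lemma bounded_linear_DHK_alex_norm_bound:
  assumes "bounded_linear_DHK a b T" "a \<le> b"
  shows "\<exists>C. \<forall>F\<in>DHK a b. alex_norm a b (T F) \<le> C * alex_norm a b F"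
  using assms alex_norm_le unfolding bounded_linear_DHK_def by meson

lemma bounded_linear_DHK_prim:
  assumes T: "bounded_linear_DHK a b T" and "a \<le> b"
    and cont: "\<And>F. F \<in> DHK a b \<Longrightarrow> continuous_on {a..b} (T F)"
  shows "bounded_linear_DHK a b (\<lambda>F. prim a (T F))"
proof -
  have lin: "T (\<lambda>y. \<alpha> * F y + \<beta> * G y) x = \<alpha> * T F x + \<beta> * T G x"
    if "F \<in> DHK a b" "G \<in> DHK a b" "x \<in> {a..b}" for F G \<alpha> \<beta> x
    using T that unfolding bounded_linear_DHK_def by blast
  obtain K where K: "\<And>F x. F \<in> DHK a b \<Longrightarrow> x \<in> {a..b} \<Longrightarrow> \<bar>T F x\<bar> \<le> K * alex_norm a b F"
    using T unfolding bounded_linear_DHK_def by blast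
  have int: "T F integrable_on {a..x}" if "F \<in> DHK a b" "x \<in> {a..b}" for F x
    using that by (intro integrable_continuous_interval continuous_on_subset[OF cont]) auto
  have "prim a (T (\<lambda>y. \<alpha> * F y + \<beta> * G y)) x = \<alpha> * prim a (T F) x + \<beta> * prim a (T G) x"
    if F: "F \<in> DHK a b" and G: "G \<in> DHK a b" and x: "x \<in> {a..b}" for F G \<alpha> \<beta> x
  proof -
    have "integral {a..x} (T (\<lambda>y. \<alpha> * F y + \<beta> * G y)) = integral {a..x} (\<lambda>y. \<alpha> * T F y + \<beta> * T G y)"
      using F G x by (intro integral_cong lin) auto
    also have "\<dots> = \<alpha> * integral {a..x} (T F) + \<beta> * integral {a..x} (T G)"
      using int[OF F x] int[OF G x] by (simp add: integral_add integrable_on_mult_right)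
    finally show ?thesis
      by (simp add: prim_def)
  qed
  moreover have "\<bar>prim a (T F) x\<bar> \<le> (b - a) * K * alex_norm a b F"
    if F: "F \<in> DHK a b" and x: "x \<in> {a..b}" for F x
  proof -
    have "norm (integral {a..x} (T F)) \<le> integral {a..x} (\<lambda>_. K * alex_norm a b F)"
      using int[OF F x] K[OF F] x by (intro integral_norm_bound_integral) auto
    also have "\<dots> = (x - a) * (K * alex_norm a b F)"
      using x by simp
    also have "\<dots> \<le> (b - a) * (K * alex_norm a b F)"
      using x K[OF F, of a] \<open>a \<le> b\<close>
      by (intro mult_right_mono) (auto intro: order_trans[OF abs_ge_zero])
    finally show ?thesis
      by (simp add: prim_def mult.assoc)
  qed
  ultimately show ?thesis
    unfolding bounded_linear_DHK_def by (intro conjI exI[of _ "(b - a) * K"]) blast+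
qed

section \<open>Riemann--Stieltjes integrals\<close>

definition fine_tagged_partition ::
  "real \<Rightarrow> real \<Rightarrow> real \<Rightarrow> nat \<Rightarrow> (nat \<Rightarrow> real) \<Rightarrow> (nat \<Rightarrow> real) \<Rightarrow> bool" where
  "fine_tagged_partition c d \<delta> m x t \<longleftrightarrow> x 0 = c \<and> x m = d \<and>
     (\<forall>i<m. x i < x (Suc i) \<and> x (Suc i) - x i < \<delta> \<and> x i \<le> t i \<and> t i \<le> x (Suc i))"

definition RS_sum ::
  "(real \<Rightarrow> real) \<Rightarrow> (real \<Rightarrow> real) \<Rightarrow> nat \<Rightarrow> (nat \<Rightarrow> real) \<Rightarrow> (nat \<Rightarrow> real) \<Rightarrow> real" where
  "RS_sum F g m x t = (\<Sum>i<m. F (t i) * (g (x (Suc i)) - g (x i)))"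

definition RS_partitions :: "real \<Rightarrow> real \<Rightarrow> (nat \<times> (nat \<Rightarrow> real) \<times> (nat \<Rightarrow> real)) filter" where
  "RS_partitions c d = (INF \<delta>\<in>{0<..}. principal {(m, x, t). fine_tagged_partition c d \<delta> m x t})"

lemma fine_tagged_partition_mono:
  assumes "fine_tagged_partition c d \<delta> m x t" "i \<le> j" "j \<le> m"
  shows "x i \<le> x j"
  using assms(2,3)
proof (induction j rule: dec_induct)
  case (step j)
  then show ?case
    using assms(1) unfolding fine_tagged_partition_def
    by (meson Suc_le_lessD less_imp_le order_trans)
qed simp

lemma fine_tagged_partition_cell:
  assumes "fine_tagged_partition c d \<delta> m x t" "i < m"
  shows "c \<le> x i" "x i \<le> t i" "t i \<le> x (Suc i)" "x (Suc i) \<le> d" "x (Suc i) - x i < \<delta>"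
  using fine_tagged_partition_mono[OF assms(1), of 0 i]
    fine_tagged_partition_mono[OF assms(1), of "Suc i" m]
    assms unfolding fine_tagged_partition_def by auto

lemma fine_tagged_partition_exists:
  assumes "c \<le> d" "0 < \<delta>"
  shows "\<exists>m x t. fine_tagged_partition c d \<delta> m x t"
proof (cases "c = d")
  case True
  then have "fine_tagged_partition c d \<delta> 0 (\<lambda>_. c) (\<lambda>_. c)"
    by (simp add: fine_tagged_partition_def)
  then show ?thesis
    by blast
next
  case False
  define m where "m = nat \<lceil>(d - c) / \<delta>\<rceil> + 1"
  define h where "h = (d - c) / real m"
  define x where "x i = c + real i * h" for i
  have "m > 0" "(d - c) / \<delta> < real m"
    unfolding m_def by linarith+
  then have "0 < h" "h < \<delta>"
    using assms False by (simp_all add: h_def field_simps)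
  moreover have "x (Suc i) - x i = h" for i
    by (simp add: x_def algebra_simps)
  moreover have "x m = d"
    using \<open>m > 0\<close> by (simp add: x_def h_def)
  ultimately have "fine_tagged_partition c d \<delta> m x x"
    unfolding fine_tagged_partition_def by (simp add: x_def)
  then show ?thesis
    by blast
qed

lemma eventually_RS_partitions:
  "eventually P (RS_partitions c d) \<longleftrightarrow>
     (\<exists>\<delta>>0. \<forall>m x t. fine_tagged_partition c d \<delta> m x t \<longrightarrow> P (m, x, t))"
  unfolding RS_partitions_def
proof (subst eventually_INF_base)
  show "\<exists>\<gamma>\<in>{0<..}. principal {(m, x, t). fine_tagged_partition c d \<gamma> m x t}
      \<le> inf (principal {(m, x, t). fine_tagged_partition c d \<delta> m x t})
            (principal {(m, x, t). fine_tagged_partition c d \<delta>' m x t})"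
    if "\<delta> \<in> {0<..}" "\<delta>' \<in> {0<..}" for \<delta> \<delta>'
    using that by (intro bexI[of _ "min \<delta> \<delta>'"]) (auto simp: fine_tagged_partition_def)
qed (auto simp: eventually_principal)

lemma RS_partitions_nontrivial: "c \<le> d \<Longrightarrow> RS_partitions c d \<noteq> bot"
  using fine_tagged_partition_exists
  by (auto simp: trivial_limit_def eventually_RS_partitions)

lemma has_RS_integral_iff_tendsto:
  "has_RS_integral F g c d I \<longleftrightarrow>
     ((\<lambda>(m, x, t). RS_sum F g m x t) \<longlongrightarrow> I) (RS_partitions c d)"
  unfolding has_RS_integral_def tendsto_iff eventually_RS_partitions RS_sum_def dist_real_def
  by (simp add: fine_tagged_partition_def)

lemma has_RS_integral_unique:
  "has_RS_integral F g c d I \<Longrightarrow> has_RS_integral F g c d J \<Longrightarrow> c \<le> d \<Longrightarrow> I = J"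
  unfolding has_RS_integral_iff_tendsto using RS_partitions_nontrivial tendsto_unique by blast

lemma RS_integral_eqI: "has_RS_integral F g c d I \<Longrightarrow> c \<le> d \<Longrightarrow> RS_integral F g c d = I"
  unfolding RS_integral_def by (blast intro: has_RS_integral_unique)

lemma has_RS_integral_degenerate: "has_RS_integral F g c c 0"
proof -
  have "RS_sum F g m x t = 0" if part: "fine_tagged_partition c c 1 m x t" for m x t
  proof -
    have "m = 0"
    proof (rule ccontr)
      assume "m \<noteq> 0"
      then have "x 0 < x 1" "x 1 \<le> x m"
        using part fine_tagged_partition_mono[OF part, of 1 m]
        unfolding fine_tagged_partition_def by auto
      then show False
        using part unfolding fine_tagged_partition_def by simp
    qed
    then show ?thesis
      by (simp add: RS_sum_def)
  qed
  then show ?thesis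
    unfolding has_RS_integral_iff_tendsto
    by (intro tendsto_eventually) (auto simp: eventually_RS_partitions intro!: exI[of _ 1])
qed

lemma has_RS_integral_const_integrator: "has_RS_integral F (\<lambda>_. C) c d 0"
  unfolding has_RS_integral_iff_tendsto RS_sum_def by (simp add: split_beta')

lemma RS_sum_lin:
  "RS_sum (\<lambda>s. \<alpha> * F s + \<beta> * G s) g m x t = \<alpha> * RS_sum F g m x t + \<beta> * RS_sum G g m x t"
  unfolding RS_sum_def sum_distrib_left sum.distrib[symmetric]
  by (rule sum.cong) (auto simp: algebra_simps)

lemma RS_sum_diff: "RS_sum (\<lambda>s. F s - G s) g m x t = RS_sum F g m x t - RS_sum G g m x t"
  using RS_sum_lin[of 1 F "-1" G] by simp

lemma has_RS_integral_lin:
  "has_RS_integral F g c d I \<Longrightarrow> has_RS_integral G g c d J \<Longrightarrow>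
    has_RS_integral (\<lambda>s. \<alpha> * F s + \<beta> * G s) g c d (\<alpha> * I + \<beta> * J)"
  unfolding has_RS_integral_iff_tendsto
  by (auto simp: RS_sum_lin split_beta' intro!: tendsto_intros)

lemma has_RS_integral_diff:
  "has_RS_integral F g c d I \<Longrightarrow> has_RS_integral G g c d J \<Longrightarrow>
    has_RS_integral (\<lambda>s. F s - G s) g c d (I - J)"
  using has_RS_integral_lin[of F g c d I G J 1 "-1"] by simp

lemma RS_sum_bound_antimono:
  assumes part: "fine_tagged_partition c d \<delta> m x t"
    and F: "\<forall>s\<in>{c..d}. \<bar>F s\<bar> \<le> M" and k: "antimono_on {c..d} k"
  shows "\<bar>RS_sum F k m x t\<bar> \<le> M * (k c - k d)"
proof -
  have cell: "\<bar>F (t i) * (k (x (Suc i)) - k (x i))\<bar> \<le> M * (k (x i) - k (x (Suc i)))"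
    if "i < m" for i
  proof -
    note fine_tagged_partition_cell[OF part that]
    then have "k (x (Suc i)) \<le> k (x i)" "\<bar>F (t i)\<bar> \<le> M"
      using k F by (auto simp: monotone_on_def)
    then show ?thesis
      by (simp add: abs_mult mult_right_mono)
  qed
  have "\<bar>RS_sum F k m x t\<bar> \<le> (\<Sum>i<m. M * (k (x i) - k (x (Suc i))))"
    unfolding RS_sum_def using cell by (intro order_trans[OF sum_abs] sum_mono) auto
  also have "\<dots> = M * (k (x 0) - k (x m))"
    by (simp add: sum_distrib_left[symmetric] sum_lessThan_telescope'[of "\<lambda>i. k (x i)"])
  finally show ?thesis
    using part by (simp add: fine_tagged_partition_def)
qed

lemma has_RS_integral_bound_antimono:
  assumes "has_RS_integral F k c d I" "c \<le> d"
    and "\<forall>s\<in>{c..d}. \<bar>F s\<bar> \<le> M" "antimono_on {c..d} k"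
  shows "\<bar>I\<bar> \<le> M * (k c - k d)"
proof (rule tendsto_le[OF RS_partitions_nontrivial[OF assms(2)] tendsto_const])
  show "((\<lambda>(m, x, t). \<bar>RS_sum F k m x t\<bar>) \<longlongrightarrow> \<bar>I\<bar>) (RS_partitions c d)"
    using tendsto_rabs[OF assms(1)[unfolded has_RS_integral_iff_tendsto]] by (simp add: split_beta')
  show "\<forall>\<^sub>F p in RS_partitions c d. (case p of (m, x, t) \<Rightarrow> \<bar>RS_sum F k m x t\<bar>) \<le> M * (k c - k d)"
    using RS_sum_bound_antimono[OF _ assms(3,4)]
    by (auto simp: eventually_RS_partitions intro: exI[of _ 1])
qed

lemma RS_sum_uniform_limit:
  assumes "c \<le> d" and k: "antimono_on {c..d} k" and lim: "uniform_limit {c..d} Gs F sequentially"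
  shows "uniform_limit {(m, x, t). \<exists>\<delta>. fine_tagged_partition c d \<delta> m x t}
           (\<lambda>j (m, x, t). RS_sum (Gs j) k m x t) (\<lambda>(m, x, t). RS_sum F k m x t) sequentially"
proof (rule uniform_limitI)
  fix \<epsilon> :: real
  assume "\<epsilon> > 0"
  define V where "V = k c - k d"
  have "V \<ge> 0"
    using k \<open>c \<le> d\<close> by (auto simp: V_def monotone_on_def)
  then have "\<epsilon> / (V + 1) * V < \<epsilon>"
    using \<open>\<epsilon> > 0\<close> by (simp add: field_simps)
  moreover have "\<forall>\<^sub>F j in sequentially. \<forall>s\<in>{c..d}. \<bar>Gs j s - F s\<bar> \<le> \<epsilon> / (V + 1)"
    using uniform_limitD[OF lim, of "\<epsilon> / (V + 1)"] \<open>\<epsilon> > 0\<close> \<open>V \<ge> 0\<close>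
    by (auto simp: dist_real_def elim!: eventually_mono)
  ultimately show "\<forall>\<^sub>F j in sequentially. \<forall>p\<in>{(m, x, t). \<exists>\<delta>. fine_tagged_partition c d \<delta> m x t}.
      dist (case p of (m, x, t) \<Rightarrow> RS_sum (Gs j) k m x t)
        (case p of (m, x, t) \<Rightarrow> RS_sum F k m x t) < \<epsilon>"
    using RS_sum_bound_antimono[OF _ _ k]
    by (elim eventually_mono) (fastforce simp: RS_sum_diff V_def dist_real_def)
qed

lemma has_RS_integral_uniform_limit:
  assumes cd: "c \<le> d" and k: "antimono_on {c..d} k"
    and Gs: "\<And>j. has_RS_integral (Gs j) k c d (Is j)"
    and lim: "uniform_limit {c..d} Gs F sequentially"
  shows "\<exists>I. has_RS_integral F k c d I"
proof -
  define V where "V = k c - k d"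
  have "V \<ge> 0"
    using k cd by (auto simp: V_def monotone_on_def)
  have "Cauchy Is"
  proof (rule CauchyI)
    fix \<epsilon> :: real
    assume "\<epsilon> > 0"
    define e where "e = \<epsilon> / (2 * V + 1)"
    have "2 * e * V < \<epsilon>" "e > 0"
      using \<open>\<epsilon> > 0\<close> \<open>V \<ge> 0\<close> by (simp_all add: e_def field_simps)
    obtain N where "\<forall>j\<ge>N. \<forall>s\<in>{c..d}. dist (Gs j s) (F s) < e"
      using uniform_limitD[OF lim \<open>e > 0\<close>] by (auto simp: eventually_sequentially)
    then have N: "\<And>j s. j \<ge> N \<Longrightarrow> s \<in> {c..d} \<Longrightarrow> \<bar>Gs j s - F s\<bar> \<le> e"
      by (fastforce simp: dist_real_def)
    have "\<bar>Is i - Is j\<bar> \<le> 2 * e * V" if "i \<ge> N" "j \<ge> N" for i j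
    proof -
      have "\<forall>s\<in>{c..d}. \<bar>Gs i s - Gs j s\<bar> \<le> 2 * e"
        using N[OF \<open>i \<ge> N\<close>] N[OF \<open>j \<ge> N\<close>] by (fastforce simp: abs_diff_le_iff)
      then show ?thesis
        using has_RS_integral_bound_antimono[OF has_RS_integral_diff[OF Gs Gs] cd _ k]
        by (simp add: V_def)
    qed
    then show "\<exists>M. \<forall>i\<ge>M. \<forall>j\<ge>M. norm (Is i - Is j) < \<epsilon>"
      using \<open>2 * e * V < \<epsilon>\<close> by fastforce
  qed
  then obtain I where "Is \<longlonglongrightarrow> I"
    by (auto simp: Cauchy_convergent_iff convergent_def)
  then have "((\<lambda>(m, x, t). RS_sum F k m x t) \<longlongrightarrow> I) (RS_partitions c d)"
    using Gs RS_sum_uniform_limit[OF cd k lim]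
    by (intro swap_uniform_limit'[where G = "RS_partitions c d"])
      (auto simp: has_RS_integral_iff_tendsto eventually_RS_partitions intro: exI[of _ 1])
  then show ?thesis
    by (auto simp: has_RS_integral_iff_tendsto)
qed

section \<open>Integration by parts against a primitive\<close>

lemma absolutely_integrable_continuous_mult:
  fixes h g :: "real \<Rightarrow> real"
  assumes "continuous_on {c..d} h" "g absolutely_integrable_on {c..d}"
  shows "(\<lambda>s. h s * g s) absolutely_integrable_on {c..d}"
proof (rule absolutely_integrable_bounded_measurable_product_real)
  show "h \<in> borel_measurable (lebesgue_on {c..d})"
    using assms(1) by (rule continuous_imp_measurable_on_sets_lebesgue) simp
  show "bounded (h ` {c..d})"
    using compact_continuous_image[OF assms(1)] compact_imp_bounded by blast
qed (use assms(2) in simp_all)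

lemma integral_mult_abs_bound:
  fixes \<phi> g :: "real \<Rightarrow> real"
  assumes "(\<lambda>s. \<phi> s * g s) integrable_on S" "(\<lambda>s. \<bar>g s\<bar>) integrable_on S" "\<forall>s\<in>S. \<bar>\<phi> s\<bar> \<le> \<eta>"
  shows "\<bar>integral S (\<lambda>s. \<phi> s * g s)\<bar> \<le> \<eta> * integral S (\<lambda>s. \<bar>g s\<bar>)"
proof -
  have "norm (integral S (\<lambda>s. \<phi> s * g s)) \<le> integral S (\<lambda>s. \<eta> * \<bar>g s\<bar>)"
    using assms by (intro integral_norm_bound_integral integrable_on_mult_right)
      (auto simp: abs_mult mult_right_mono)
  then show ?thesis
    by simp
qed

lemma integral_sum_fine_tagged_partition:
  fixes h :: "real \<Rightarrow> real"
  assumes part: "fine_tagged_partition c d \<delta> m x t" and h: "h integrable_on {c..d}"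
  shows "(\<Sum>i<m. integral {x i..x (Suc i)} h) = integral {c..d} h"
proof -
  have "(\<Sum>i<j. integral {x i..x (Suc i)} h) = integral {c..x j} h" if "j \<le> m" for j
    using that
  proof (induction j)
    case 0
    then show ?case
      using part by (simp add: fine_tagged_partition_def)
  next
    case (Suc j)
    note cell = fine_tagged_partition_cell[OF part, of j]
    have "h integrable_on {c..x (Suc j)}"
      using Suc.prems cell by (intro integrable_on_subinterval[OF h]) auto
    then have "integral {c..x j} h + integral {x j..x (Suc j)} h = integral {c..x (Suc j)} h"
      using Suc.prems cell by (intro Henstock_Kurzweil_Integration.integral_combine) auto
    then show ?case
      using Suc by simp
  qed
  then show ?thesis
    using part by (simp add: fine_tagged_partition_def)
qed

text \<open>
  On a cell \<open>[u, v]\<close> with tag \<open>w\<close>, summation by parts turns the error of the Riemann--Stieltjes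
  sum of the primitive into \<open>\<integral>\<^sub>w\<^sup>v (k v - k) g + \<integral>\<^sub>u\<^sup>w (k u - k) g\<close>.
\<close>

lemma RS_primitive_cell_estimate:
  fixes k g :: "real \<Rightarrow> real"
  assumes "c \<le> u" "u \<le> w" "w \<le> v" "v \<le> d"
    and k: "continuous_on {c..d} k" and g: "g absolutely_integrable_on {c..d}"
    and osc: "\<forall>r\<in>{u..v}. \<forall>s\<in>{u..v}. \<bar>k r - k s\<bar> \<le> \<eta>"
  shows "\<bar>integral {w..v} g * k v + integral {u..w} g * k u - integral {u..v} (\<lambda>s. k s * g s)\<bar>
           \<le> \<eta> * integral {u..v} (\<lambda>s. \<bar>g s\<bar>)"
proof -
  have int: "h absolutely_integrable_on {p..q}"
    if "h absolutely_integrable_on {c..d}" "c \<le> p" "q \<le> d"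
    for h :: "real \<Rightarrow> real" and p q
    using that by (auto intro: absolutely_integrable_on_subinterval)
  have kg: "(\<lambda>s. (k r - k s) * g s) absolutely_integrable_on {c..d}" for r
    using k g by (intro absolutely_integrable_continuous_mult continuous_intros)
  have piece: "\<bar>integral {p..q} (\<lambda>s. (k r - k s) * g s)\<bar> \<le> \<eta> * integral {p..q} (\<lambda>s. \<bar>g s\<bar>)"
    if "u \<le> p" "q \<le> v" "r \<in> {u..v}" for p q r
    using that assms(1-4) osc int[OF kg, of p q] int[OF g, of p q]
    by (intro integral_mult_abs_bound) (auto simp: absolutely_integrable_on_def)
  have split: "integral {u..v} h = integral {u..w} h + integral {w..v} h"
    if "h integrable_on {c..d}" for h :: "real \<Rightarrow> real"
    using that assms(1-4) integrable_on_subinterval[OF that, of u v]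
    by (intro Henstock_Kurzweil_Integration.integral_combine[symmetric]) auto
  have lin: "integral {p..q} (\<lambda>s. (k r - k s) * g s)
      = integral {p..q} g * k r - integral {p..q} (\<lambda>s. k s * g s)"
    if "c \<le> p" "q \<le> d" for p q r
  proof -
    have "g integrable_on {p..q}" "(\<lambda>s. k s * g s) integrable_on {p..q}"
      using int[OF g that] int[OF absolutely_integrable_continuous_mult[OF k g] that]
      by (simp_all add: absolutely_integrable_on_def)
    then show ?thesis
      using integral_diff[OF integrable_on_mult_right[of g "{p..q}" "k r"], of "\<lambda>s. k s * g s"]
      by (simp add: left_diff_distrib right_diff_distrib ac_simps)
  qed
  have "integral {w..v} g * k v + integral {u..w} g * k u - integral {u..v} (\<lambda>s. k s * g s)
      = integral {w..v} (\<lambda>s. (k v - k s) * g s) + integral {u..w} (\<lambda>s. (k u - k s) * g s)"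
    using split[OF set_lebesgue_integral_eq_integral(1)[OF
          absolutely_integrable_continuous_mult[OF k g]]]
      lin assms(1-4) by simp
  also have "\<bar>\<dots>\<bar> \<le> \<eta> * integral {w..v} (\<lambda>s. \<bar>g s\<bar>) + \<eta> * integral {u..w} (\<lambda>s. \<bar>g s\<bar>)"
    using piece assms(1-4) by (intro order_trans[OF abs_triangle_ineq] add_mono) auto
  also have "\<dots> = \<eta> * integral {u..v} (\<lambda>s. \<bar>g s\<bar>)"
    using split g by (simp add: absolutely_integrable_on_def algebra_simps)
  finally show ?thesis .
qed

lemma RS_sum_primitive_estimate:
  fixes k g :: "real \<Rightarrow> real"
  assumes part: "fine_tagged_partition c d \<delta> m x t"
    and k: "continuous_on {c..d} k" and g: "g absolutely_integrable_on {c..d}"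
    and osc: "\<forall>r\<in>{c..d}. \<forall>s\<in>{c..d}. \<bar>r - s\<bar> < \<delta> \<longrightarrow> \<bar>k r - k s\<bar> \<le> \<eta>"
  shows "\<bar>RS_sum (\<lambda>s. integral {c..s} g) k m x t
            - (integral {c..d} g * k d - integral {c..d} (\<lambda>s. k s * g s))\<bar>
           \<le> \<eta> * integral {c..d} (\<lambda>s. \<bar>g s\<bar>)"
proof -
  define G where "G s = integral {c..s} g" for s
  note cell = fine_tagged_partition_cell[OF part]
  have gi: "g integrable_on {c..d}" and agi: "(\<lambda>s. \<bar>g s\<bar>) integrable_on {c..d}"
    using g by (simp_all add: absolutely_integrable_on_def)
  have kgi: "(\<lambda>s. k s * g s) integrable_on {c..d}"
    using set_lebesgue_integral_eq_integral(1)[OF absolutely_integrable_continuous_mult[OF k g]] .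
  have G_diff: "G q - G p = integral {p..q} g" if "c \<le> p" "p \<le> q" "q \<le> d" for p q
    using that Henstock_Kurzweil_Integration.integral_combine[of c p q g]
      integrable_on_subinterval[OF gi, of c q]
    by (simp add: G_def)
  define D where "D i = integral {t i..x (Suc i)} g * k (x (Suc i))
    + integral {x i..t i} g * k (x i)
    - integral {x i..x (Suc i)} (\<lambda>s. k s * g s)" for i
  have telescope: "(\<Sum>i<m. G (x (Suc i)) * k (x (Suc i)) - G (x i) * k (x i)) = G d * k d"
    using sum_lessThan_telescope[of "\<lambda>i. G (x i) * k (x i)" m] part
    by (simp add: fine_tagged_partition_def G_def)
  have "D i = G (x (Suc i)) * k (x (Suc i)) - G (x i) * k (x i)
      - G (t i) * (k (x (Suc i)) - k (x i)) - integral {x i..x (Suc i)} (\<lambda>s. k s * g s)"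
    if "i < m" for i
    using G_diff[of "t i" "x (Suc i)"] G_diff[of "x i" "t i"] cell[OF that]
    by (simp add: D_def algebra_simps)
  then have "(\<Sum>i<m. D i) = G d * k d - integral {c..d} (\<lambda>s. k s * g s) - RS_sum G k m x t"
    using telescope integral_sum_fine_tagged_partition[OF part kgi]
    by (simp add: RS_sum_def sum_subtractf)
  moreover have "\<bar>D i\<bar> \<le> \<eta> * integral {x i..x (Suc i)} (\<lambda>s. \<bar>g s\<bar>)" if "i < m" for i
    unfolding D_def using cell[OF that] osc
    by (intro RS_primitive_cell_estimate[OF _ _ _ _ k g]) force+
  then have "\<bar>\<Sum>i<m. D i\<bar> \<le> \<eta> * integral {c..d} (\<lambda>s. \<bar>g s\<bar>)"
    unfolding integral_sum_fine_tagged_partition[OF part agi, symmetric] sum_distrib_left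
    by (intro order_trans[OF sum_abs] sum_mono) auto
  ultimately show ?thesis
    unfolding G_def[abs_def, symmetric] by (simp add: G_def[of d] abs_minus_commute)
qed

lemma has_RS_integral_primitive:
  fixes k g :: "real \<Rightarrow> real"
  assumes k: "continuous_on {c..d} k" and g: "g absolutely_integrable_on {c..d}"
  shows "has_RS_integral (\<lambda>s. integral {c..s} g) k c d
           (integral {c..d} g * k d - integral {c..d} (\<lambda>s. k s * g s))"
  unfolding has_RS_integral_iff_tendsto
proof (rule tendstoI)
  fix \<epsilon> :: real
  assume "\<epsilon> > 0"
  define A where "A = integral {c..d} (\<lambda>s. \<bar>g s\<bar>)"
  have "A \<ge> 0"
    unfolding A_def using g by (intro integral_nonneg) (simp_all add: absolutely_integrable_on_def)
  define \<eta> where "\<eta> = \<epsilon> / (A + 1)"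
  have "\<eta> > 0" "\<eta> * A < \<epsilon>"
    using \<open>\<epsilon> > 0\<close> \<open>A \<ge> 0\<close> by (simp_all add: \<eta>_def field_simps)
  obtain \<delta> where "\<delta> > 0"
    and osc: "\<forall>r\<in>{c..d}. \<forall>s\<in>{c..d}. \<bar>r - s\<bar> < \<delta> \<longrightarrow> \<bar>k r - k s\<bar> \<le> \<eta>"
    using compact_uniformly_continuous[OF k compact_Icc] \<open>\<eta> > 0\<close>
    unfolding uniformly_continuous_on_def dist_real_def by (metis less_imp_le)
  show "\<forall>\<^sub>F p in RS_partitions c d.
      dist (case p of (m, x, t) \<Rightarrow> RS_sum (\<lambda>s. integral {c..s} g) k m x t)
      (integral {c..d} g * k d - integral {c..d} (\<lambda>s. k s * g s)) < \<epsilon>"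
    unfolding eventually_RS_partitions dist_real_def
    using RS_sum_primitive_estimate[OF _ k g osc] \<open>\<eta> * A < \<epsilon>\<close> \<open>\<delta> > 0\<close>
    by (fastforce simp: A_def)
qed

lemma DHK_approx_by_primitive:
  assumes F: "F \<in> DHK a b" and "a \<le> b" "e > 0"
  shows "\<exists>g. continuous_on UNIV g \<and> (\<forall>s\<in>{a..b}. \<bar>prim a g s - F s\<bar> \<le> e)"
proof -
  obtain p where p: "real_polynomial_function p" "\<And>x. x \<in> {a..b} \<Longrightarrow> \<bar>F x - p x\<bar> < e / 2"
    using Stone_Weierstrass_real_polynomial_function[OF compact_Icc, of a b F "e / 2"] F \<open>e > 0\<close>
    by (auto simp: DHK_def)
  obtain p' where p': "real_polynomial_function p'" "\<And>x. (p has_real_derivative p' x) (at x)"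
    using has_real_derivative_polynomial_function[OF p(1)] by blast
  have prim_p': "prim a p' s = p s - p a" if "s \<in> {a..b}" for s
    unfolding prim_def using that p'(2)
    by (intro integral_unique fundamental_theorem_of_calculus)
      (auto simp: has_real_derivative_iff_has_vector_derivative[symmetric]
        intro: has_field_derivative_at_within)
  have "\<bar>prim a p' s - F s\<bar> \<le> e" if s: "s \<in> {a..b}" for s
  proof -
    have "\<bar>F s - p s\<bar> < e / 2" "\<bar>F a - p a\<bar> < e / 2" "F a = 0"
      using p(2)[of s] p(2)[of a] s F \<open>a \<le> b\<close> by (simp_all add: DHK_def)
    then show ?thesis
      using prim_p'[OF s] by linarith
  qed
  moreover have "continuous_on UNIV p'"
    using p'(1) continuous_on_polymonial_function real_polynomial_function_eq by blast
  ultimately show ?thesis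
    by blast
qed

lemma DHK_approx_by_continuous:
  assumes F: "F \<in> DHK a b" and "a \<le> b"
  obtains gs where "\<And>j. continuous_on UNIV (gs j)"
    and "(\<lambda>j. alex_norm a b (\<lambda>x. prim a (gs j) x - F x)) \<longlonglongrightarrow> 0"
proof -
  have "\<forall>j. \<exists>g. continuous_on UNIV g \<and> (\<forall>s\<in>{a..b}. \<bar>prim a g s - F s\<bar> \<le> inverse (real (Suc j)))"
    using DHK_approx_by_primitive[OF assms] by simp
  from choice[OF this] obtain gs where gs: "\<forall>j. continuous_on UNIV (gs j) \<and>
      (\<forall>s\<in>{a..b}. \<bar>prim a (gs j) s - F s\<bar> \<le> inverse (real (Suc j)))"
    by blast
  then have close: "\<And>j s. s \<in> {a..b} \<Longrightarrow> \<bar>prim a (gs j) s - F s\<bar> \<le> inverse (real (Suc j))"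
    by blast
  show ?thesis
    using gs alex_norm_tendsto_zeroI[OF \<open>a \<le> b\<close> close LIMSEQ_inverse_real_of_nat]
    by (intro that[of gs]) auto
qed

section \<open>Fractional integrals of order at least one\<close>

lemma rl_kernel_nonneg: "0 \<le> rl_kernel n u"
  by (simp add: rl_kernel_def)

lemma rl_kernel_1: "rl_kernel 1 u = 1"
  by (simp add: rl_kernel_def)

lemma rl_kernel_powr: "1 < m \<Longrightarrow> 0 \<le> u \<Longrightarrow> rl_kernel m u = u powr (m - 1)"
  by (simp add: rl_kernel_def)

lemma continuous_on_rl_kernel:
  assumes "1 \<le> m"
  shows "continuous_on {c..x} (\<lambda>t. rl_kernel m (x - t))"
proof (cases "m = 1")
  case False
  then have "continuous_on {c..x} (\<lambda>t. (x - t) powr (m - 1))"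
    using assms by (intro continuous_on_powr' continuous_intros) auto
  then show ?thesis
    by (rule continuous_on_eq) (use False assms in \<open>auto simp: rl_kernel_powr\<close>)
qed (simp add: rl_kernel_1)

lemma antimono_on_rl_kernel:
  assumes "1 \<le> m"
  shows "antimono_on {c..x} (\<lambda>t. rl_kernel m (x - t))"
  using assms by (cases "m = 1") (auto simp: monotone_on_def rl_kernel_def intro!: powr_mono2)

lemma rl_kernel_variation_le:
  assumes "1 \<le> m" "a \<le> x" "x \<le> b"
  shows "rl_kernel m (x - a) - rl_kernel m 0 \<le> (b - a) powr (m - 1)"
  using assms by (cases "m = 1") (auto simp: rl_kernel_def intro!: powr_mono2)

lemma RL_fun_eq:
  "has_RS_integral F (\<lambda>t. rl_kernel m (x - t)) a x I \<Longrightarrow> a \<le> x \<Longrightarrow>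
    RL_fun m a F x = (F x * rl_kernel m 0 - I) / Gamma m"
  unfolding RL_fun_def hk_int_bv_def by (simp add: RS_integral_eqI)

lemma RL_fun_left_endpoint: "F \<in> DHK a b \<Longrightarrow> RL_fun m a F a = 0"
  using RL_fun_eq[OF has_RS_integral_degenerate] by (simp add: DHK_def)

lemma RL_fun_order_one:
  assumes "a \<le> x"
  shows "RL_fun 1 a F x = F x"
proof -
  have "has_RS_integral F (\<lambda>t. rl_kernel 1 (x - t)) a x 0"
    using has_RS_integral_const_integrator[of F 1 a x] by (simp add: rl_kernel_1)
  from RL_fun_eq[OF this assms] show ?thesis
    by (simp add: rl_kernel_1)
qed

lemma RL_L1_eq_RL_fun_prim:
  assumes "1 \<le> m" "x \<in> {a..b}" and g: "g absolutely_integrable_on {a..b}"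
  shows "RL_L1 m a g x = RL_fun m a (prim a g) x"
proof -
  have "a \<le> x" "g absolutely_integrable_on {a..x}"
    using assms(2) absolutely_integrable_on_subinterval[OF g] by auto
  then have "has_RS_integral (prim a g) (\<lambda>t. rl_kernel m (x - t)) a x
      (prim a g x * rl_kernel m 0 - integral {a..x} (\<lambda>t. rl_kernel m (x - t) * g t))"
    using has_RS_integral_primitive[OF continuous_on_rl_kernel[OF \<open>1 \<le> m\<close>]]
    by (simp add: prim_def[abs_def])
  from RL_fun_eq[OF this \<open>a \<le> x\<close>] show ?thesis
    unfolding RL_L1_def by simp
qed

lemma has_RS_integral_rl_kernel_exists:
  assumes "1 \<le> m" and F: "F \<in> DHK a b" and x: "x \<in> {a..b}"
  shows "\<exists>I. has_RS_integral F (\<lambda>t. rl_kernel m (x - t)) a x I"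
proof -
  have "a \<le> x" "a \<le> b"
    using x by auto
  obtain gs where gs: "\<And>j. continuous_on UNIV (gs j)"
    and lim: "(\<lambda>j. alex_norm a b (\<lambda>x. prim a (gs j) x - F x)) \<longlonglongrightarrow> 0"
    using DHK_approx_by_continuous[OF F \<open>a \<le> b\<close>] by blast
  have "prim a (gs j) \<in> DHK a b" for j
    by (intro prim_DHK integrable_continuous_interval continuous_on_subset[OF gs]) auto
  then have "uniform_limit {a..b} (\<lambda>j. prim a (gs j)) F sequentially"
    using F lim by (intro alex_norm_tendsto_imp_uniform_limit) (auto simp: DHK_def)
  then have lim_x: "uniform_limit {a..x} (\<lambda>j. prim a (gs j)) F sequentially"
    by (rule uniform_limit_on_subset) (use x in auto)
  have "gs j absolutely_integrable_on {a..x}" for j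
    by (intro absolutely_integrable_continuous_real continuous_on_subset[OF gs]) auto
  then have RS_j: "has_RS_integral (prim a (gs j)) (\<lambda>t. rl_kernel m (x - t)) a x
      (integral {a..x} (gs j) * rl_kernel m (x - x)
        - integral {a..x} (\<lambda>t. rl_kernel m (x - t) * gs j t))"
    for j
    using has_RS_integral_primitive[OF continuous_on_rl_kernel[OF \<open>1 \<le> m\<close>]]
    by (simp add: prim_def[abs_def])
  show ?thesis
    by (rule has_RS_integral_uniform_limit[OF \<open>a \<le> x\<close> antimono_on_rl_kernel[OF \<open>1 \<le> m\<close>] RS_j lim_x])
qed

lemma RL_fun_lin:
  assumes "1 \<le> m" and F: "F \<in> DHK a b" and G: "G \<in> DHK a b" and x: "x \<in> {a..b}"
  shows "RL_fun m a (\<lambda>y. \<alpha> * F y + \<beta> * G y) x = \<alpha> * RL_fun m a F x + \<beta> * RL_fun m a G x"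
proof -
  obtain I J where I: "has_RS_integral F (\<lambda>t. rl_kernel m (x - t)) a x I"
    and J: "has_RS_integral G (\<lambda>t. rl_kernel m (x - t)) a x J"
    using has_RS_integral_rl_kernel_exists[OF \<open>1 \<le> m\<close> _ x] F G by blast
  have "a \<le> x" "Gamma m > 0"
    using x \<open>1 \<le> m\<close> by auto
  then show ?thesis
    unfolding RL_fun_eq[OF I \<open>a \<le> x\<close>] RL_fun_eq[OF J \<open>a \<le> x\<close>]
      RL_fun_eq[OF has_RS_integral_lin[OF I J] \<open>a \<le> x\<close>]
    by (simp add: field_simps)
qed

lemma abs_RL_fun_le:
  assumes "1 \<le> m" and F: "F \<in> DHK a b" and x: "x \<in> {a..b}"
  shows "\<bar>RL_fun m a F x\<bar> \<le> (1 + (b - a) powr (m - 1)) / Gamma m * alex_norm a b F"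
proof -
  obtain I where I: "has_RS_integral F (\<lambda>t. rl_kernel m (x - t)) a x I"
    using has_RS_integral_rl_kernel_exists[OF \<open>1 \<le> m\<close> F x] by blast
  have bound: "\<forall>s\<in>{a..x}. \<bar>F s\<bar> \<le> alex_norm a b F"
    using F x by (auto simp: DHK_def intro!: abs_le_alex_norm)
  have "\<bar>I\<bar> \<le> alex_norm a b F * (rl_kernel m (x - a) - rl_kernel m 0)"
    using has_RS_integral_bound_antimono[OF I _ bound antimono_on_rl_kernel[OF \<open>1 \<le> m\<close>]] x by simp
  also have "\<dots> \<le> alex_norm a b F * (b - a) powr (m - 1)"
    using rl_kernel_variation_le[OF \<open>1 \<le> m\<close>] bound x
    by (intro mult_left_mono) (auto intro: order_trans[OF abs_ge_zero])
  finally have I_bound: "\<bar>I\<bar> \<le> alex_norm a b F * (b - a) powr (m - 1)" .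
  have "\<bar>F x * rl_kernel m 0\<bar> \<le> \<bar>F x\<bar>"
    by (simp add: abs_mult rl_kernel_def mult_left_le)
  also have "\<dots> \<le> alex_norm a b F"
    using bound x by simp
  finally have "\<bar>F x * rl_kernel m 0 - I\<bar> \<le> (1 + (b - a) powr (m - 1)) * alex_norm a b F"
    using I_bound by (simp add: algebra_simps abs_triangle_ineq4[THEN order_trans])
  then show ?thesis
    using RL_fun_eq[OF I] x \<open>1 \<le> m\<close> by (simp add: abs_div divide_right_mono)
qed

lemma bounded_linear_DHK_RL_fun: "1 \<le> m \<Longrightarrow> bounded_linear_DHK a b (RL_fun m a)"
  unfolding bounded_linear_DHK_def using RL_fun_lin abs_RL_fun_le by blast

lemma continuous_on_RL_L1:
  assumes "1 < m" and h: "continuous_on UNIV h"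
  shows "continuous_on {a..b} (RL_L1 m a h)"
proof -
  \<comment> \<open>the kernel extended by \<open>0\<close> to negative arguments makes the integrand jointly continuous\<close>
  define \<psi> where "\<psi> u = (max u 0) powr (m - 1)" for u :: real
  have "continuous_on UNIV (\<lambda>p. \<psi> (fst p - snd p) * h (snd p))"
    unfolding \<psi>_def using \<open>1 < m\<close>
    by (intro continuous_intros continuous_on_powr' continuous_on_compose2[OF h]) auto
  then have "continuous_on ({a..b} \<times> cbox a b) (\<lambda>(x, t). \<psi> (x - t) * h t)"
    by (rule continuous_on_eq[OF continuous_on_subset]) auto
  then have "continuous_on {a..b} (\<lambda>x. integral (cbox a b) (\<lambda>t. \<psi> (x - t) * h t))"
    by (rule integral_continuous_on_param)
  moreover have "Gamma m > 0"
    using \<open>1 < m\<close> by auto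
  ultimately have cont: "continuous_on {a..b} (\<lambda>x. integral {a..b} (\<lambda>t. \<psi> (x - t) * h t) / Gamma m)"
    by (intro continuous_on_divide continuous_on_const) (auto simp: cbox_interval)
  have eq: "RL_L1 m a h x = integral {a..b} (\<lambda>t. \<psi> (x - t) * h t) / Gamma m"
    if x: "x \<in> {a..b}" for x
  proof -
    have "(\<lambda>t. \<psi> (x - t) * h t) integrable_on {a..b}"
      unfolding \<psi>_def using \<open>1 < m\<close>
      by (intro integrable_continuous_interval continuous_intros continuous_on_powr'
          continuous_on_subset[OF h]) auto
    then have "integral {a..b} (\<lambda>t. \<psi> (x - t) * h t)
        = integral {a..x} (\<lambda>t. \<psi> (x - t) * h t) + integral {x..b} (\<lambda>t. \<psi> (x - t) * h t)"
      using x by (simp add: Henstock_Kurzweil_Integration.integral_combine)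
    also have "integral {x..b} (\<lambda>t. \<psi> (x - t) * h t) = 0"
      by (subst integral_cong[of _ _ "\<lambda>_. 0"]) (auto simp: \<psi>_def max_def)
    also have "integral {a..x} (\<lambda>t. \<psi> (x - t) * h t)
        = integral {a..x} (\<lambda>t. rl_kernel m (x - t) * h t)"
      using \<open>1 < m\<close> by (intro integral_cong) (auto simp: \<psi>_def rl_kernel_powr)
    finally show ?thesis
      by (simp add: RL_L1_def)
  qed
  show ?thesis
    using eq by (intro continuous_on_eq[OF cont]) simp
qed

lemma RL_fun_DHK:
  assumes "1 \<le> m" "a \<le> b" and F: "F \<in> DHK a b"
  shows "RL_fun m a F \<in> DHK a b"
proof -
  have "continuous_on {a..b} (RL_fun m a F)"
  proof (cases "m = 1")
    case True
    have "continuous_on {a..b} F"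
      using F by (simp add: DHK_def)
    then show ?thesis
      by (rule continuous_on_eq) (simp add: True RL_fun_order_one)
  next
    case False
    obtain gs where gs: "\<And>j. continuous_on UNIV (gs j)"
      and lim: "(\<lambda>j. alex_norm a b (\<lambda>x. prim a (gs j) x - F x)) \<longlonglongrightarrow> 0"
      using DHK_approx_by_continuous[OF F \<open>a \<le> b\<close>] by blast
    have int: "gs j absolutely_integrable_on {a..b}" for j
      by (intro absolutely_integrable_continuous_real continuous_on_subset[OF gs]) auto
    have Gs: "prim a (gs j) \<in> DHK a b" for j
      by (intro prim_DHK set_lebesgue_integral_eq_integral(1) int)
    have cont: "continuous_on {a..b} (RL_fun m a (prim a (gs j)))" for j
    proof (rule continuous_on_eq)
      show "continuous_on {a..b} (RL_L1 m a (gs j))"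
        using False \<open>1 \<le> m\<close> by (intro continuous_on_RL_L1 gs) auto
      show "RL_L1 m a (gs j) x = RL_fun m a (prim a (gs j)) x" if "x \<in> {a..b}" for x
        by (rule RL_L1_eq_RL_fun_prim[OF \<open>1 \<le> m\<close> that int])
    qed
    have "\<forall>\<^sub>F j in sequentially. continuous_on {a..b} (RL_fun m a (prim a (gs j)))"
      using cont by simp
    moreover have "uniform_limit {a..b} (\<lambda>j. RL_fun m a (prim a (gs j))) (RL_fun m a F)
        sequentially"
      by (rule bounded_linear_DHK_tendsto(2)[OF bounded_linear_DHK_RL_fun[OF \<open>1 \<le> m\<close>]
            \<open>a \<le> b\<close> Gs F lim])
    ultimately show ?thesis
      by (rule uniform_limit_theorem[OF _ _ trivial_limit_sequentially])
  qed
  then show ?thesis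
    using RL_fun_left_endpoint[OF F] by (simp add: DHK_def)
qed

lemma RL_prim_order_ge_one: "1 \<le> n \<Longrightarrow> RL_prim n a b = (\<lambda>F. prim a (RL_fun n a F))"
  by (simp add: RL_prim_def fun_eq_iff)

lemma RL_fun_integrable:
  "1 \<le> n \<Longrightarrow> a \<le> b \<Longrightarrow> F \<in> DHK a b \<Longrightarrow> RL_fun n a F integrable_on {a..b}"
  using RL_fun_DHK by (simp add: DHK_def integrable_continuous_interval)

lemma bounded_linear_DHK_RL_prim_order_ge_one:
  assumes "1 \<le> n" "a \<le> b"
  shows "bounded_linear_DHK a b (RL_prim n a b)"
  unfolding RL_prim_order_ge_one[OF \<open>1 \<le> n\<close>]
  by (rule bounded_linear_DHK_prim[OF bounded_linear_DHK_RL_fun[OF \<open>1 \<le> n\<close>] \<open>a \<le> b\<close>])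
    (use RL_fun_DHK[OF assms] in \<open>simp add: DHK_def\<close>)

lemma RL_L1_approximation:
  assumes "1 \<le> n" "a \<le> b" and F: "F \<in> DHK a b"
    and gs: "\<And>k. gs k absolutely_integrable_on {a..b}"
    and lim: "(\<lambda>k. alex_norm a b (\<lambda>x. prim a (gs k) x - F x)) \<longlonglongrightarrow> 0"
  shows "(\<lambda>k. alex_norm a b (\<lambda>x. prim a (RL_L1 n a (gs k)) x - RL_prim n a b F x)) \<longlonglongrightarrow> 0"
    and "uniform_limit {a..b} (\<lambda>k. RL_L1 n a (gs k)) (RL_fun n a F) sequentially"
proof -
  have Gs: "prim a (gs k) \<in> DHK a b" for k
    by (intro prim_DHK set_lebesgue_integral_eq_integral(1) gs)
  have eq: "RL_L1 n a (gs k) x = RL_fun n a (prim a (gs k)) x" if "x \<in> {a..b}" for k x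
    by (rule RL_L1_eq_RL_fun_prim[OF \<open>1 \<le> n\<close> that gs])
  have "prim a (RL_L1 n a (gs k)) x = RL_prim n a b (prim a (gs k)) x" if "x \<in> {a..b}" for k x
    unfolding RL_prim_order_ge_one[OF \<open>1 \<le> n\<close>] prim_def[of a "RL_L1 n a (gs k)"]
      prim_def[of a "RL_fun n a (prim a (gs k))"]
    using that eq by (intro integral_cong) auto
  then have "alex_norm a b (\<lambda>x. prim a (RL_L1 n a (gs k)) x - RL_prim n a b F x)
      = alex_norm a b (\<lambda>x. RL_prim n a b (prim a (gs k)) x - RL_prim n a b F x)" for k
    by (intro alex_norm_cong) simp
  then show "(\<lambda>k. alex_norm a b (\<lambda>x. prim a (RL_L1 n a (gs k)) x - RL_prim n a b F x)) \<longlonglongrightarrow> 0"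
    using bounded_linear_DHK_tendsto(1)[OF bounded_linear_DHK_RL_prim_order_ge_one[OF assms(1,2)]
        \<open>a \<le> b\<close> Gs F lim]
    by simp
  have "uniform_limit {a..b} (\<lambda>k. RL_L1 n a (gs k)) (RL_fun n a F) sequentially \<longleftrightarrow>
      uniform_limit {a..b} (\<lambda>k. RL_fun n a (prim a (gs k))) (RL_fun n a F) sequentially"
    using eq by (intro uniform_limit_cong') simp_all
  then show "uniform_limit {a..b} (\<lambda>k. RL_L1 n a (gs k)) (RL_fun n a F) sequentially"
    using bounded_linear_DHK_tendsto(2)[OF bounded_linear_DHK_RL_fun[OF \<open>1 \<le> n\<close>] \<open>a \<le> b\<close> Gs F lim]
    by blast
qed

section \<open>The semigroup property on \<open>L\<^sup>1\<close>\<close>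

lemma sigma_finite_lebesgue: "sigma_finite_measure (lebesgue :: real measure)"
proof -
  obtain A :: "real set set" where A: "countable A" "A \<subseteq> sets lborel" "\<Union>A = space lborel"
      "\<forall>a\<in>A. emeasure lborel a \<noteq> \<infinity>"
    using sigma_finite_measure.sigma_finite_countable[OF sigma_finite_lborel] by blast
  then show ?thesis
    unfolding sigma_finite_measure_def by (intro exI[of _ A]) (auto simp: main_part_sets)
qed

lemma pair_sigma_finite_lebesgue:
  "pair_sigma_finite (lebesgue :: real measure) (lebesgue :: real measure)"
  unfolding pair_sigma_finite_def using sigma_finite_lebesgue by simp

lemma has_integral_rl_kernel:
  assumes "0 < n" "t \<le> x"
  shows "((\<lambda>s. rl_kernel n (s - t)) has_integral (x - t) powr n / n) {t..x}"
proof -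
  have "((\<lambda>s. (s - t) powr (n - 1)) has_integral ((x - t) powr n / n - (t - t) powr n / n)) {t..x}"
  proof (rule fundamental_theorem_of_calculus_interior[OF \<open>t \<le> x\<close>])
    show "continuous_on {t..x} (\<lambda>s. (s - t) powr n / n)"
      using \<open>0 < n\<close> by (intro continuous_intros continuous_on_powr') auto
    show "((\<lambda>s. (s - t) powr n / n) has_vector_derivative (s - t) powr (n - 1)) (at s)"
      if "s \<in> {t<..<x}" for s
      using that \<open>0 < n\<close>
      by (auto intro!: derivative_eq_intros
          simp: has_real_derivative_iff_has_vector_derivative[symmetric])
  qed
  then have "((\<lambda>s. (s - t) powr (n - 1)) has_integral (x - t) powr n / n) {t..x}"
    using \<open>0 < n\<close> by simp
  then show ?thesis
    by (rule has_integral_spike[OF negligible_sing[of t], rotated]) (auto simp: rl_kernel_def)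
qed

text \<open>
  The integrand of the Fubini argument on the triangle \<open>a \<le> t \<le> s \<le> x\<close>: integrating over \<open>s\<close>
  gives \<open>\<phi>(t) (x - t)\<^sup>n / n\<close>, integrating over \<open>t\<close> gives \<open>\<Gamma>(n) J\<^sup>n \<phi>(s)\<close>.
\<close>

definition RL_triangle :: "real \<Rightarrow> real \<Rightarrow> real \<Rightarrow> (real \<Rightarrow> real) \<Rightarrow> real \<Rightarrow> real \<Rightarrow> real" where
  "RL_triangle n a x \<phi> t s = (if a \<le> t \<and> t \<le> s \<and> s \<le> x then rl_kernel n (s - t) * \<phi> t else 0)"

lemma RL_triangle_inner:
  assumes "0 < n"
  shows "integrable lebesgue (RL_triangle n a x \<phi> t)"
    and "(\<integral>s. RL_triangle n a x \<phi> t s \<partial>lebesgue) = indicator {a..x} t * (\<phi> t * ((x - t) powr n / n))"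
proof -
  have "integrable lebesgue (RL_triangle n a x \<phi> t) \<and>
      (\<integral>s. RL_triangle n a x \<phi> t s \<partial>lebesgue) = indicator {a..x} t * (\<phi> t * ((x - t) powr n / n))"
  proof (cases "a \<le> t \<and> t \<le> x")
    case True
    have hi: "((\<lambda>s. rl_kernel n (s - t)) has_integral (x - t) powr n / n) {t..x}"
      using has_integral_rl_kernel[OF assms] True by simp
    then have si: "set_integrable lebesgue {t..x} (\<lambda>s. rl_kernel n (s - t))"
      using rl_kernel_nonneg
      by (intro nonnegative_absolutely_integrable_1) (auto simp: has_integral_integrable)
    have li: "(LINT s:{t..x}|lebesgue. rl_kernel n (s - t)) = (x - t) powr n / n"
      using set_lebesgue_integral_eq_integral(2)[OF si] hi by (simp add: integral_unique)
    have "RL_triangle n a x \<phi> t = (\<lambda>s. \<phi> t * (indicator {t..x} s *\<^sub>R rl_kernel n (s - t)))"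
      using True by (auto simp: RL_triangle_def indicator_def fun_eq_iff)
    then show ?thesis
      using si li True by (simp add: set_integrable_def set_lebesgue_integral_def)
  next
    case False
    then have "RL_triangle n a x \<phi> t = (\<lambda>s. 0)"
      by (auto simp: RL_triangle_def fun_eq_iff)
    then show ?thesis
      using False by simp
  qed
  then show "integrable lebesgue (RL_triangle n a x \<phi> t)"
    and "(\<integral>s. RL_triangle n a x \<phi> t s \<partial>lebesgue) = indicator {a..x} t * (\<phi> t * ((x - t) powr n / n))"
    by auto
qed

lemma RL_triangle_measurable:
  assumes "set_integrable lebesgue {a..x} \<phi>"
  shows "(\<lambda>(t, s). RL_triangle n a x \<phi> t s) \<in> borel_measurable (lebesgue \<Otimes>\<^sub>M lebesgue)"
proof -
  define \<psi> where "\<psi> t = indicator {a..x} t * \<phi> t" for t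
  have \<psi>: "\<psi> \<in> borel_measurable lebesgue"
    using assms unfolding set_integrable_def \<psi>_def by (simp add: borel_measurable_integrable)
  have k: "rl_kernel n \<in> borel_measurable borel"
    unfolding rl_kernel_def by measurable
  have fst[measurable]:
    "(\<lambda>p. fst p) \<in> borel_measurable (lebesgue \<Otimes>\<^sub>M lebesgue :: (real \<times> real) measure)"
    using measurable_compose[OF measurable_fst id_borel_measurable_lebesgue] by (simp add: id_def)
  have snd[measurable]:
    "(\<lambda>p. snd p) \<in> borel_measurable (lebesgue \<Otimes>\<^sub>M lebesgue :: (real \<times> real) measure)"
    using measurable_compose[OF measurable_snd id_borel_measurable_lebesgue] by (simp add: id_def)
  have [measurable]: "(\<lambda>p. \<psi> (fst p)) \<in> borel_measurable (lebesgue \<Otimes>\<^sub>M lebesgue)"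
    using measurable_compose[OF measurable_fst \<psi>] .
  have [measurable]: "(\<lambda>p. rl_kernel n (snd p - fst p)) \<in> borel_measurable (lebesgue \<Otimes>\<^sub>M lebesgue)"
    using measurable_compose[OF borel_measurable_diff[OF snd fst] k] .
  have "(\<lambda>p. if a \<le> fst p \<and> fst p \<le> snd p \<and> snd p \<le> x
        then rl_kernel n (snd p - fst p) * \<psi> (fst p) else 0)
      \<in> borel_measurable (lebesgue \<Otimes>\<^sub>M lebesgue)"
    by measurable
  also have "(\<lambda>p. if a \<le> fst p \<and> fst p \<le> snd p \<and> snd p \<le> x
        then rl_kernel n (snd p - fst p) * \<psi> (fst p) else 0)
      = (\<lambda>(t, s). RL_triangle n a x \<phi> t s)"
    by (auto simp: fun_eq_iff RL_triangle_def \<psi>_def)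
  finally show ?thesis .
qed

lemma integrable_RL_triangle:
  assumes "0 < n" and \<phi>: "\<phi> absolutely_integrable_on {a..x}"
  shows "integrable (lebesgue \<Otimes>\<^sub>M lebesgue) (\<lambda>(t, s). RL_triangle n a x \<phi> t s)"
proof (rule pair_sigma_finite.Fubini_integrable[OF pair_sigma_finite_lebesgue
      RL_triangle_measurable[OF \<phi>]])
  have "(\<lambda>t. \<bar>\<phi> t\<bar>) absolutely_integrable_on {a..x}"
    using \<phi> by (simp add: absolutely_integrable_on_def nonnegative_absolutely_integrable_1)
  then have "(\<lambda>t. (x - t) powr n / n * \<bar>\<phi> t\<bar>) absolutely_integrable_on {a..x}"
    using \<open>0 < n\<close>
    by (intro absolutely_integrable_continuous_mult continuous_intros continuous_on_powr') auto
  moreover have "(\<integral>s. norm (RL_triangle n a x \<phi> t s) \<partial>lebesgue)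
      = indicator {a..x} t * ((x - t) powr n / n * \<bar>\<phi> t\<bar>)"
    for t
  proof -
    have "(\<lambda>s. norm (RL_triangle n a x \<phi> t s)) = RL_triangle n a x (\<lambda>t. \<bar>\<phi> t\<bar>) t"
      by (simp add: fun_eq_iff RL_triangle_def abs_mult rl_kernel_nonneg)
    then show ?thesis
      using RL_triangle_inner(2)[OF \<open>0 < n\<close>] by (simp add: ac_simps)
  qed
  ultimately show "integrable lebesgue
      (\<lambda>t. \<integral>s. norm (case (t, s) of (t, s) \<Rightarrow> RL_triangle n a x \<phi> t s) \<partial>lebesgue)"
    by (simp add: set_integrable_def)
  show "AE t in lebesgue. integrable lebesgue (\<lambda>s. case (t, s) of (t, s) \<Rightarrow> RL_triangle n a x \<phi> t s)"
    using RL_triangle_inner(1)[OF \<open>0 < n\<close>] by simp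
qed

lemma has_integral_RL_L1_triangle:
  assumes "0 < n" and g: "g absolutely_integrable_on {a..x}"
  shows "((\<lambda>s. Gamma n * RL_L1 n a g s) has_integral
           (\<integral>s. (\<integral>t. RL_triangle n a x g t s \<partial>lebesgue) \<partial>lebesgue)) {a..x}"
proof -
  define \<Phi> where "\<Phi> s = (\<integral>t. RL_triangle n a x g t s \<partial>lebesgue)" for s
  note int = integrable_RL_triangle[OF assms]
  have "(\<Phi> has_integral (\<integral>s. \<Phi> s \<partial>lebesgue)) UNIV"
    unfolding \<Phi>_def
    by (rule has_integral_integral_lebesgue[OF
          pair_sigma_finite.integrable_snd[OF pair_sigma_finite_lebesgue int]])
  moreover have "\<Phi> = (\<lambda>s. if s \<in> {a..x} then \<Phi> s else 0)"
  proof
    fix s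
    have "(\<lambda>t. RL_triangle n a x g t s) = (\<lambda>t. 0)" if "s \<notin> {a..x}"
      using that by (auto simp: RL_triangle_def fun_eq_iff)
    then show "\<Phi> s = (if s \<in> {a..x} then \<Phi> s else 0)"
      by (simp add: \<Phi>_def)
  qed
  ultimately have has_\<Phi>: "(\<Phi> has_integral (\<integral>s. \<Phi> s \<partial>lebesgue)) {a..x}"
    using has_integral_restrict_UNIV[of "{a..x}" \<Phi>] by simp
  obtain N
    where N_sub: "{s \<in> space lebesgue. \<not> integrable lebesgue (\<lambda>t. RL_triangle n a x g t s)} \<subseteq> N"
    and "emeasure lebesgue N = 0" "N \<in> sets lebesgue"
    using pair_sigma_finite.AE_integrable_snd[OF pair_sigma_finite_lebesgue int] by (rule AE_E)
  then have "N \<in> null_sets lebesgue"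
    by (intro null_setsI)
  have int_N: "integrable lebesgue (\<lambda>t. RL_triangle n a x g t s)" if "s \<notin> N" for s
    using N_sub that by auto
  have \<Phi>_eq: "\<Phi> s = Gamma n * RL_L1 n a g s" if "s \<in> {a..x}" "s \<notin> N" for s
  proof -
    have eq: "(\<lambda>t. RL_triangle n a x g t s)
        = (\<lambda>t. indicator {a..s} t *\<^sub>R (rl_kernel n (s - t) * g t))"
      using that by (auto simp: RL_triangle_def indicator_def fun_eq_iff)
    then have "set_integrable lebesgue {a..s} (\<lambda>t. rl_kernel n (s - t) * g t)"
      using int_N[OF \<open>s \<notin> N\<close>] by (simp add: set_integrable_def)
    then have "(LINT t:{a..s}|lebesgue. rl_kernel n (s - t) * g t)
        = integral {a..s} (\<lambda>t. rl_kernel n (s - t) * g t)"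
      by (rule set_lebesgue_integral_eq_integral(2))
    moreover have "Gamma n > 0"
      using \<open>0 < n\<close> by simp
    ultimately show ?thesis
      unfolding \<Phi>_def eq set_lebesgue_integral_def RL_L1_def by simp
  qed
  show ?thesis
    unfolding \<Phi>_def[symmetric]
    by (rule has_integral_spike[OF negligible_iff_null_sets[THEN iffD2,
          OF \<open>N \<in> null_sets lebesgue\<close>] _ has_\<Phi>]) (simp add: \<Phi>_eq)
qed

lemma integral_RL_L1:
  assumes "0 < n" and g: "g absolutely_integrable_on {a..b}" and x: "x \<in> {a..b}"
  shows "integral {a..x} (RL_L1 n a g) = RL_L1 (n + 1) a g x"
proof -
  have "Gamma n > 0"
    using \<open>0 < n\<close> by auto
  have gx: "g absolutely_integrable_on {a..x}"
    using absolutely_integrable_on_subinterval[OF g] x by auto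
  have kg: "(\<lambda>t. (x - t) powr n / n * g t) absolutely_integrable_on {a..x}"
    using \<open>0 < n\<close>
    by (intro absolutely_integrable_continuous_mult[OF _ gx] continuous_intros continuous_on_powr')
      auto
  have "(\<integral>t. (\<integral>s. RL_triangle n a x g t s \<partial>lebesgue) \<partial>lebesgue)
      = (LINT t:{a..x}|lebesgue. (x - t) powr n / n * g t)"
    by (simp add: RL_triangle_inner(2)[OF \<open>0 < n\<close>] set_lebesgue_integral_def ac_simps)
  also have "\<dots> = integral {a..x} (\<lambda>t. (x - t) powr n / n * g t)"
    by (rule set_lebesgue_integral_eq_integral(2)[OF kg])
  also have "\<dots> = integral {a..x} (\<lambda>t. 1 / n * (rl_kernel (n + 1) (x - t) * g t))"
    using \<open>0 < n\<close> by (intro integral_cong) (auto simp: rl_kernel_powr)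
  also have "\<dots> = Gamma n * RL_L1 (n + 1) a g x"
    using \<open>0 < n\<close> Gamma_plus1[of n] \<open>Gamma n > 0\<close>[THEN less_imp_neq, symmetric]
    by (simp add: RL_L1_def nonpos_Ints_def)
  finally have "(\<integral>s. (\<integral>t. RL_triangle n a x g t s \<partial>lebesgue) \<partial>lebesgue)
      = Gamma n * RL_L1 (n + 1) a g x"
    using pair_sigma_finite.Fubini_integral[OF pair_sigma_finite_lebesgue
        integrable_RL_triangle[OF \<open>0 < n\<close> gx]]
    by simp
  then have "((\<lambda>s. Gamma n * RL_L1 n a g s) has_integral Gamma n * RL_L1 (n + 1) a g x) {a..x}"
    using has_integral_RL_L1_triangle[OF \<open>0 < n\<close> gx] by simp
  then have "((\<lambda>s. 1 / Gamma n * (Gamma n * RL_L1 n a g s)) has_integral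
      1 / Gamma n * (Gamma n * RL_L1 (n + 1) a g x)) {a..x}"
    by (rule has_integral_mult_right)
  then show ?thesis
    using \<open>Gamma n > 0\<close> by (simp add: integral_unique)
qed

section \<open>Fractional integrals of order below one\<close>

lemma prim_RL_L1_eq_RL_fun:
  assumes "0 < n" "g absolutely_integrable_on {a..b}" "x \<in> {a..b}"
  shows "prim a (RL_L1 n a g) x = RL_fun (n + 1) a (prim a g) x"
  using integral_RL_L1[OF assms] RL_L1_eq_RL_fun_prim[of "n + 1" x a b g] assms
  by (simp add: prim_def)

lemma RL_limit_RL_fun:
  assumes "0 < n" "a \<le> b" and F: "F \<in> DHK a b"
  shows "RL_limit n a b F (RL_fun (n + 1) a F)"
  unfolding RL_limit_def
proof (intro conjI allI impI)
  have "1 \<le> n + 1"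
    using \<open>0 < n\<close> by simp
  then show "RL_fun (n + 1) a F \<in> DHK a b"
    using RL_fun_DHK \<open>a \<le> b\<close> F by blast
  fix gs :: "nat \<Rightarrow> real \<Rightarrow> real"
  assume "(\<forall>k. gs k absolutely_integrable_on {a..b}) \<and>
    (\<lambda>k. alex_norm a b (\<lambda>x. prim a (gs k) x - F x)) \<longlonglongrightarrow> 0"
  then have gs: "\<And>k. gs k absolutely_integrable_on {a..b}"
    and lim: "(\<lambda>k. alex_norm a b (\<lambda>x. prim a (gs k) x - F x)) \<longlonglongrightarrow> 0"
    by auto
  have Gs: "prim a (gs k) \<in> DHK a b" for k
    by (intro prim_DHK set_lebesgue_integral_eq_integral(1) gs)
  have "alex_norm a b (\<lambda>x. prim a (RL_L1 n a (gs k)) x - RL_fun (n + 1) a F x)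
      = alex_norm a b (\<lambda>x. RL_fun (n + 1) a (prim a (gs k)) x - RL_fun (n + 1) a F x)" for k
    by (intro alex_norm_cong) (simp add: prim_RL_L1_eq_RL_fun[OF \<open>0 < n\<close> gs])
  then show "(\<lambda>k. alex_norm a b (\<lambda>x. prim a (RL_L1 n a (gs k)) x - RL_fun (n + 1) a F x)) \<longlonglongrightarrow> 0"
    using bounded_linear_DHK_tendsto(1)[OF bounded_linear_DHK_RL_fun[OF \<open>1 \<le> n + 1\<close>]
        \<open>a \<le> b\<close> Gs F lim]
    by simp
qed

lemma RL_limit_unique:
  assumes "0 < n" "a \<le> b" and F: "F \<in> DHK a b"
    and P: "RL_limit n a b F P" and Q: "RL_limit n a b F Q" and x: "x \<in> {a..b}"
  shows "P x = Q x"
proof -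
  obtain gs where gs: "\<And>j. continuous_on UNIV (gs j)"
    and lim: "(\<lambda>j. alex_norm a b (\<lambda>x. prim a (gs j) x - F x)) \<longlonglongrightarrow> 0"
    using DHK_approx_by_continuous[OF F \<open>a \<le> b\<close>] by blast
  have int: "gs j absolutely_integrable_on {a..b}" for j
    by (intro absolutely_integrable_continuous_real continuous_on_subset[OF gs]) auto
  have cont: "continuous_on {a..b} (prim a (RL_L1 n a (gs j)))" for j
  proof (rule continuous_on_eq)
    have "1 \<le> n + 1" "prim a (gs j) \<in> DHK a b"
      using \<open>0 < n\<close> by (auto intro!: prim_DHK set_lebesgue_integral_eq_integral(1) int)
    then show "continuous_on {a..b} (RL_fun (n + 1) a (prim a (gs j)))"
      using RL_fun_DHK \<open>a \<le> b\<close> by (simp add: DHK_def)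
    show "RL_fun (n + 1) a (prim a (gs j)) x = prim a (RL_L1 n a (gs j)) x" if "x \<in> {a..b}" for x
      using prim_RL_L1_eq_RL_fun[OF \<open>0 < n\<close> int that] by simp
  qed
  have PQ: "continuous_on {a..b} P" "continuous_on {a..b} Q"
    using P Q by (simp_all add: RL_limit_def DHK_def)
  have "(\<lambda>j. alex_norm a b (\<lambda>x. prim a (RL_L1 n a (gs j)) x - P x)) \<longlonglongrightarrow> 0"
    "(\<lambda>j. alex_norm a b (\<lambda>x. prim a (RL_L1 n a (gs j)) x - Q x)) \<longlonglongrightarrow> 0"
    using P Q int lim by (simp_all add: RL_limit_def)
  then show ?thesis
    by (rule alex_norm_limit_unique[OF cont PQ _ _ x])
qed

lemma RL_prim_fractional:
  assumes "0 < n" "n < 1" "a \<le> b" and F: "F \<in> DHK a b" and x: "x \<in> {a..b}"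
  shows "RL_prim n a b F x = RL_fun (n + 1) a F x"
proof -
  have "RL_limit n a b F (RL_prim n a b F)"
    using someI[where P = "RL_limit n a b F", OF RL_limit_RL_fun[OF \<open>0 < n\<close> \<open>a \<le> b\<close> F]] assms(1,2)
    by (simp add: RL_prim_def)
  then show ?thesis
    by (rule RL_limit_unique[OF \<open>0 < n\<close> \<open>a \<le> b\<close> F _ RL_limit_RL_fun[OF \<open>0 < n\<close> \<open>a \<le> b\<close> F] x])
qed

lemma bounded_linear_DHK_RL_prim:
  assumes "0 \<le> n" "a \<le> b"
  shows "bounded_linear_DHK a b (RL_prim n a b)"
proof -
  consider "n = 0" | "0 < n" "n < 1" | "1 \<le> n"
    using \<open>0 \<le> n\<close> by linarith
  then show ?thesis
  proof cases
    case 1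
    then have "RL_prim n a b = (\<lambda>F. F)"
      by (simp add: RL_prim_def fun_eq_iff)
    then show ?thesis
      using bounded_linear_DHK_id by simp
  next
    case 2
    then have "1 \<le> n + 1"
      by simp
    show ?thesis
      by (rule bounded_linear_DHK_cong[OF bounded_linear_DHK_RL_fun[OF \<open>1 \<le> n + 1\<close>]])
        (rule RL_prim_fractional[OF 2 \<open>a \<le> b\<close>])
  next
    case 3
    then show ?thesis
      using bounded_linear_DHK_RL_prim_order_ge_one \<open>a \<le> b\<close> by simp
  qed
qed

lemma RL_prim_DHK:
  assumes "0 \<le> n" "a \<le> b" and F: "F \<in> DHK a b"
  shows "RL_prim n a b F \<in> DHK a b"
proof -
  consider "n = 0" | "0 < n" "n < 1" | "1 \<le> n"
    using \<open>0 \<le> n\<close> by linarith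
  then show ?thesis
  proof cases
    case 1
    then show ?thesis
      using F by (simp add: RL_prim_def)
  next
    case 2
    then have "RL_fun (n + 1) a F \<in> DHK a b"
      using RL_fun_DHK[of "n + 1", OF _ \<open>a \<le> b\<close> F] by simp
    with 2 show ?thesis
      using DHK_cong[OF \<open>a \<le> b\<close>] RL_prim_fractional[OF _ _ \<open>a \<le> b\<close> F] by blast
  next
    case 3
    then show ?thesis
      using RL_fun_integrable \<open>a \<le> b\<close> F by (simp add: RL_prim_order_ge_one prim_DHK)
  qed
qed

theorem theorem3p3:
  fixes a b n :: real
  assumes ab: "a < b" and n: "0 \<le> n"
  shows
    \<comment> \<open>(i) J_a^n maps D_HK into D_HK\<close>
    "(\<forall>F\<in>DHK a b.
        (1 \<le> n \<longrightarrow> RL_fun n a F integrable_on {a..b}) \<and>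
        (0 < n \<and> n < 1 \<longrightarrow> (\<exists>P. RL_limit n a b F P)) \<and>
        RL_prim n a b F \<in> DHK a b)
   \<comment> \<open>(ii) linear and bounded\<close>
   \<and> (\<forall>F\<in>DHK a b. \<forall>G\<in>DHK a b. \<forall>\<alpha> \<beta>::real. \<forall>x\<in>{a..b}.
        RL_prim n a b (\<lambda>y. \<alpha> * F y + \<beta> * G y) x
          = \<alpha> * RL_prim n a b F x + \<beta> * RL_prim n a b G x)
   \<and> (\<exists>C. \<forall>F\<in>DHK a b. alex_norm a b (RL_prim n a b F) \<le> C * alex_norm a b F)
   \<comment> \<open>(iii) continuity\<close>
   \<and> (\<forall>(Fs::nat \<Rightarrow> real \<Rightarrow> real) F.
        (\<forall>k. Fs k \<in> DHK a b) \<and> F \<in> DHK a b \<and>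
        (\<lambda>k. alex_norm a b (\<lambda>x. Fs k x - F x)) \<longlonglongrightarrow> 0
        \<longrightarrow> (\<lambda>k. alex_norm a b (\<lambda>x. RL_prim n a b (Fs k) x - RL_prim n a b F x)) \<longlonglongrightarrow> 0)
   \<comment> \<open>(iv) for n \<ge> 1, approximation by L^1 sequences, in D_HK and uniformly\<close>
   \<and> (1 \<le> n \<longrightarrow>
        (\<forall>F\<in>DHK a b. \<forall>gs::nat \<Rightarrow> real \<Rightarrow> real.
          (\<forall>k. gs k absolutely_integrable_on {a..b}) \<and>
          (\<lambda>k. alex_norm a b (\<lambda>x. prim a (gs k) x - F x)) \<longlonglongrightarrow> 0
          \<longrightarrow> (\<lambda>k. alex_norm a b (\<lambda>x. prim a (RL_L1 n a (gs k)) x - RL_prim n a b F x)) \<longlonglongrightarrow> 0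
            \<and> uniform_limit {a..b} (\<lambda>k. RL_L1 n a (gs k)) (RL_fun n a F) sequentially))"
proof -
  have "a \<le> b"
    using ab by simp
  note T = bounded_linear_DHK_RL_prim[OF n \<open>a \<le> b\<close>]
  show ?thesis (is "?maps \<and> ?linear \<and> ?bounded \<and> ?continuous \<and> ?approx")
  proof (intro conjI)
    show ?maps
      using RL_fun_integrable RL_limit_RL_fun RL_prim_DHK[OF n] \<open>a \<le> b\<close> by blast
    show ?linear
      using T by (simp add: bounded_linear_DHK_def)
    show ?bounded
      by (rule bounded_linear_DHK_alex_norm_bound[OF T \<open>a \<le> b\<close>])
    show ?continuous
      using bounded_linear_DHK_tendsto(1)[OF T \<open>a \<le> b\<close>] by blast
    show ?approx
      using RL_L1_approximation[OF _ \<open>a \<le> b\<close>] by blast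
  qed
qed

end
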